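(* Let $X$ be a (Tychonoff) space and $\{K_n\}_{n\in\mathbb N}$ a sequence of compact subsets of $X$ each of which has property $C$. Then every continuous map $f\colon X\to Y$ into a metrizable space $Y$ admits a factorization $(Z,h,g)$ such that $Z$ is metrizable and every set $h(K_n)$ has property $C$.
   Context: A factorization of $f\colon X\to Y$ is a triple $(Z,h,g)$ where $h\colon X\to Z$ and $g\colon Z\to Y$ are continuous, $f=g\circ h$ (with $g$ onto $Y$ when $f$ is onto), and $w(Z)\le w(Y)$, $w$ denoting topological weight. A compact space $K$ has property $C$ if for every sequence $\{\omega_n\}$ of open covers of $K$ there is a sequence $\{\gamma_n\}$ of disjoint open families with each $\gamma_n$ refining $\omega_n$ and $\bigcup_n\gamma_n$ covering $K$. *)

theory Defs
  imports "HOL-Analysis.Analysis"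
begin

definition is_base_of :: "'a topology \<Rightarrow> 'a set set \<Rightarrow> bool" where
  "is_base_of T B \<longleftrightarrow> (\<forall>U\<in>B. openin T U) \<and>
     (\<forall>U. openin T U \<longrightarrow> (\<exists>C. C \<subseteq> B \<and> \<Union>C = U))"

text \<open>w(Z) \<le> w(Y): the weight (least cardinality of a base) of Z is at most that of Y,
  i.e. every base of Y dominates in cardinality some base of Z.\<close>
definition weight_le :: "'a topology \<Rightarrow> 'b topology \<Rightarrow> bool" where
  "weight_le Z Y \<longleftrightarrow>
     (\<forall>BY. is_base_of Y BY \<longrightarrow> (\<exists>BZ. is_base_of Z BZ \<and> (card_of BZ, card_of BY) \<in> ordLeq))"

definition refines :: "'a set set \<Rightarrow> 'a set set \<Rightarrow> bool" where
  "refines \<gamma> \<omega> \<longleftrightarrow> (\<forall>V\<in>\<gamma>. \<exists>U\<in>\<omega>. V \<subseteq> U)"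

definition property_C :: "'a topology \<Rightarrow> bool" where
  "property_C K \<longleftrightarrow> compact_space K \<and>
     (\<forall>\<omega> :: nat \<Rightarrow> 'a set set.
        (\<forall>n. (\<forall>U\<in>\<omega> n. openin K U) \<and> \<Union>(\<omega> n) = topspace K) \<longrightarrow>
        (\<exists>\<gamma> :: nat \<Rightarrow> 'a set set.
           (\<forall>n. (\<forall>V\<in>\<gamma> n. openin K V) \<and> pairwise disjnt (\<gamma> n) \<and> refines (\<gamma> n) (\<omega> n)) \<and>
           \<Union>(\<Union>n. \<gamma> n) = topspace K))"

definition factorization ::
  "'a topology \<Rightarrow> 'b topology \<Rightarrow> ('a \<Rightarrow> 'b) \<Rightarrow> 'c topology \<Rightarrow> ('a \<Rightarrow> 'c) \<Rightarrow> ('c \<Rightarrow> 'b) \<Rightarrow> bool" where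
  "factorization X Y f Z h g \<longleftrightarrow>
     continuous_map X Z h \<and> continuous_map Z Y g \<and>
     (\<forall>x\<in>topspace X. f x = g (h x)) \<and>
     (f ` topspace X = topspace Y \<longrightarrow> g ` topspace Z = topspace Y) \<and>
     weight_le Z Y"

end

(*
  Write Y as a metric space (M, d). For a sequence \<phi> of continuous real functions on X the
  pseudometric d (f x) (f y) + \<Sum>i. 2^-i min 1 \<bar>\<phi> i x - \<phi> i y\<bar> is continuous, and its metric
  quotient Z is a metrizable space through which f factors; f and every \<phi> i descend to continuous
  maps on Z. Preimages of base sets of Y, cut down by finitely many rational conditions on the
  \<phi> i, form a base of Z, so w(Z) \<le> w(Y) when Y is infinite.

  Property C of K n passes to h ` K n once \<phi> is rich enough. Lebesgue numbers refine a sequence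
  of open covers of h ` K n by covers of K n by balls of the pseudometric built from finitely
  many \<phi> i; property C and compactness of K n give finitely many disjoint open families
  refining these, and complete regularity turns them into cozero sets of finitely many continuous
  functions. If those functions are among the \<phi> i, the cozero sets are saturated for h and
  their images are the required disjoint open families. The ball covers are indexed by countable
  data, so a countable closure argument yields one countable family serving all of them.
*)

theory Submission
  imports Defs
begin

unbundle cardinal_syntax

section \<open>A weighted series pseudometric\<close>

definition series_dist :: "(nat \<Rightarrow> 'a \<Rightarrow> real) \<Rightarrow> 'a \<Rightarrow> 'a \<Rightarrow> real" where
  "series_dist \<phi> x y = (\<Sum>i. (1/2)^i * min 1 \<bar>\<phi> i x - \<phi> i y\<bar>)"

lemma summable_series_dist: "summable (\<lambda>i. (1/2::real)^i * min 1 \<bar>\<phi> i x - \<phi> i y\<bar>)"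
  by (rule summable_comparison_test[OF _ summable_geometric[of "1/2::real"]]) auto

lemma series_dist_nonneg: "0 \<le> series_dist \<phi> x y"
  unfolding series_dist_def by (intro suminf_nonneg summable_series_dist) auto

lemma series_dist_self [simp]: "series_dist \<phi> x x = 0"
  by (simp add: series_dist_def)

lemma series_dist_commute: "series_dist \<phi> x y = series_dist \<phi> y x"
  by (simp add: series_dist_def abs_minus_commute)

lemma series_dist_triangle: "series_dist \<phi> x z \<le> series_dist \<phi> x y + series_dist \<phi> y z"
proof -
  have "min 1 \<bar>\<phi> i x - \<phi> i z\<bar> \<le> min 1 \<bar>\<phi> i x - \<phi> i y\<bar> + min 1 \<bar>\<phi> i y - \<phi> i z\<bar>" for i
    by (simp add: min_def abs_if split: if_splits)
  then have "(1/2)^i * min 1 \<bar>\<phi> i x - \<phi> i z\<bar> \<le>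
      (1/2)^i * min 1 \<bar>\<phi> i x - \<phi> i y\<bar> + (1/2::real)^i * min 1 \<bar>\<phi> i y - \<phi> i z\<bar>" for i
    by (simp flip: distrib_left)
  then show ?thesis
    unfolding series_dist_def
    by (subst suminf_add[OF summable_series_dist summable_series_dist])
       (intro suminf_le summable_add summable_series_dist)
qed

lemma series_dist_term_le: "(1/2)^i * min 1 \<bar>\<phi> i x - \<phi> i y\<bar> \<le> series_dist \<phi> x y"
proof -
  have "(1/2)^i * min 1 \<bar>\<phi> i x - \<phi> i y\<bar> \<le> (\<Sum>i'<Suc i. (1/2::real)^i' * min 1 \<bar>\<phi> i' x - \<phi> i' y\<bar>)"
    by (simp add: sum_nonneg)
  also have "\<dots> \<le> series_dist \<phi> x y"
    unfolding series_dist_def by (intro sum_le_suminf summable_series_dist) auto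
  finally show ?thesis .
qed

lemma series_dist_eq_0_imp: "series_dist \<phi> x y = 0 \<Longrightarrow> \<phi> i x = \<phi> i y"
  using series_dist_term_le[of i \<phi> x y]
  by (auto simp: min_def mult_le_0_iff power_le_zero_eq split: if_splits)

lemma series_dist_le:
  assumes "\<And>i. i < j \<Longrightarrow> \<bar>\<phi> i x - \<phi> i y\<bar> \<le> b" and "0 \<le> b"
  shows "series_dist \<phi> x y \<le> 2 * b + 2 * (1/2)^j"
proof -
  define t where "t i = (1/2::real)^i * min 1 \<bar>\<phi> i x - \<phi> i y\<bar>" for i
  have "(\<Sum>i<j. t i) \<le> (\<Sum>i<j. (1/2)^i * b)"
    using assms by (intro sum_mono) (auto simp: t_def intro!: mult_left_mono min.coboundedI2)
  also have "\<dots> \<le> (\<Sum>i. (1/2)^i * b)"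
    using \<open>0 \<le> b\<close> by (intro sum_le_suminf summable_mult2 summable_geometric) auto
  also have "\<dots> = 2 * b"
    by (simp add: suminf_mult2[symmetric] summable_geometric suminf_geometric)
  finally have head: "(\<Sum>i<j. t i) \<le> 2 * b" .
  have "summable (\<lambda>n. t (n + j))"
    unfolding t_def by (rule summable_ignore_initial_segment[OF summable_series_dist])
  then have "(\<Sum>n. t (n + j)) \<le> (\<Sum>n. (1/2)^j * (1/2::real)^n)"
    by (intro suminf_le summable_mult summable_geometric)
       (auto simp: t_def power_add intro: mult_left_le)
  also have "\<dots> = 2 * (1/2)^j"
    by (simp add: suminf_mult suminf_geometric summable_geometric)
  finally have tail: "(\<Sum>n. t (n + j)) \<le> 2 * (1/2)^j" .
  have "series_dist \<phi> x y = (\<Sum>n. t (n + j)) + (\<Sum>i<j. t i)"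
    unfolding series_dist_def t_def by (rule suminf_split_initial_segment[OF summable_series_dist])
  with head tail show ?thesis by linarith
qed

section \<open>Bases and finite spaces\<close>

lemma is_base_of_iff_local:
  "is_base_of T \<B> \<longleftrightarrow> (\<forall>U\<in>\<B>. openin T U) \<and>
     (\<forall>S x. openin T S \<and> x \<in> S \<longrightarrow> (\<exists>U\<in>\<B>. x \<in> U \<and> U \<subseteq> S))"
proof -
  have "(\<exists>\<C>\<subseteq>\<B>. \<Union>\<C> = S) \<longleftrightarrow> (\<forall>x\<in>S. \<exists>U\<in>\<B>. x \<in> U \<and> U \<subseteq> S)" for S
  proof
    assume "\<forall>x\<in>S. \<exists>U\<in>\<B>. x \<in> U \<and> U \<subseteq> S"
    then show "\<exists>\<C>\<subseteq>\<B>. \<Union>\<C> = S"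
      by (intro exI[of _ "{U \<in> \<B>. U \<subseteq> S}"]) auto
  qed auto
  then show ?thesis
    unfolding is_base_of_def by auto
qed

lemma infinite_base_of_t1_space:
  assumes "is_base_of T \<B>" and "t1_space T" and "infinite (topspace T)"
  shows "infinite \<B>"
proof
  assume "finite \<B>"
  have "inj_on (\<lambda>x. {U \<in> \<B>. x \<in> U}) (topspace T)"
  proof (rule inj_onI, rule ccontr)
    fix x y assume xy: "x \<in> topspace T" "y \<in> topspace T" "{U \<in> \<B>. x \<in> U} = {U \<in> \<B>. y \<in> U}" "x \<noteq> y"
    then obtain S where "openin T S" "x \<in> S" "y \<notin> S"
      using \<open>t1_space T\<close> unfolding t1_space_def by blast
    then show False
      using xy assms(1) unfolding is_base_of_iff_local by blast
  qed
  moreover have "finite ((\<lambda>x. {U \<in> \<B>. x \<in> U}) ` topspace T)"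
    by (rule finite_subset[of _ "Pow \<B>"]) (use \<open>finite \<B>\<close> in auto)
  ultimately show False
    using assms(3) finite_imageD by blast
qed

lemma property_C_finite_t1_space:
  assumes "t1_space T" and "finite (topspace T)"
  shows "property_C T"
  unfolding property_C_def
proof (intro conjI allI impI)
  show "compact_space T"
    using assms(2) by (simp add: compact_space_def finite_imp_compactin)
  fix \<omega> :: "nat \<Rightarrow> 'a set set"
  assume \<omega>: "\<forall>n. (\<forall>U\<in>\<omega> n. openin T U) \<and> \<Union>(\<omega> n) = topspace T"
  have open_singleton: "openin T {x}" if "x \<in> topspace T" for x
  proof -
    have "closedin T (topspace T - {x})"
      using assms t1_space_closedin_finite by blast
    then have "openin T (topspace T - (topspace T - {x}))"
      by (rule openin_diff[OF openin_topspace])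
    with that show ?thesis by (simp add: Diff_Diff_Int Int_absorb1)
  qed
  define \<gamma> where "\<gamma> n = (if n = 0 then (\<lambda>x. {x}) ` topspace T else {})" for n :: nat
  show "\<exists>\<gamma>. (\<forall>n. (\<forall>V\<in>\<gamma> n. openin T V) \<and> pairwise disjnt (\<gamma> n) \<and> refines (\<gamma> n) (\<omega> n)) \<and>
            \<Union>(\<Union>n. \<gamma> n) = topspace T"
  proof (intro exI[of _ \<gamma>] conjI allI)
    fix n
    show "\<forall>V\<in>\<gamma> n. openin T V" "pairwise disjnt (\<gamma> n)"
      by (auto simp: \<gamma>_def open_singleton pairwise_def)
    show "refines (\<gamma> n) (\<omega> n)"
      using \<omega> by (fastforce simp: \<gamma>_def refines_def)
  qed (auto simp: \<gamma>_def)
qed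

section \<open>Finitely many disjoint refinements\<close>

definition disjoint_refinement_cover :: "'a set set \<Rightarrow> 'a set \<Rightarrow> 'a set set list \<Rightarrow> bool" where
  "disjoint_refinement_cover \<V> K \<omega>s \<longleftrightarrow> (\<exists>\<gamma>.
     (\<forall>m < length \<omega>s. \<gamma> m \<subseteq> \<V> \<and> pairwise disjnt (\<gamma> m) \<and> refines (\<gamma> m) (\<omega>s ! m)) \<and>
     K \<subseteq> (\<Union>m < length \<omega>s. \<Union>(\<gamma> m)))"

lemma disjoint_refinement_cover_mono:
  "disjoint_refinement_cover \<V> K \<omega>s \<Longrightarrow> \<V> \<subseteq> \<V>' \<Longrightarrow> disjoint_refinement_cover \<V>' K \<omega>s"
  unfolding disjoint_refinement_cover_def by blast

lemma property_C_finitely_many_stages: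
  assumes "property_C T" and "\<And>n. (\<forall>U\<in>\<omega> n. openin T U) \<and> \<Union>(\<omega> n) = topspace T"
  shows "\<exists>N. disjoint_refinement_cover (Collect (openin T)) (topspace T) (map \<omega> [0..<N])"
proof -
  note C = assms(1)[unfolded property_C_def]
  obtain \<gamma> where \<gamma>: "\<And>n. (\<forall>V\<in>\<gamma> n. openin T V) \<and> pairwise disjnt (\<gamma> n) \<and> refines (\<gamma> n) (\<omega> n)"
    and covers: "\<Union>(\<Union>n. \<gamma> n) = topspace T"
    using C[THEN conjunct2, rule_format, of \<omega>, OF assms(2)] by (elim exE conjE) (intro that, blast+)
  obtain \<F> where \<F>: "finite \<F>" "\<F> \<subseteq> (\<Union>n. \<gamma> n)" "topspace T \<subseteq> \<Union>\<F>"
  proof -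
    have "(\<forall>U\<in>(\<Union>n. \<gamma> n). openin T U) \<and> topspace T \<subseteq> \<Union>(\<Union>n. \<gamma> n)"
      using \<gamma> covers by blast
    from C[THEN conjunct1, unfolded compact_space_alt, rule_format, OF this] that
    show thesis by blast
  qed
  have "\<forall>V\<in>\<F>. \<exists>n. V \<in> \<gamma> n"
    using \<F>(2) by blast
  then obtain stage where stage: "\<And>V. V \<in> \<F> \<Longrightarrow> V \<in> \<gamma> (stage V)"
    by metis
  define N where "N = Suc (Max (stage ` \<F>))"
  have "stage V < N" if "V \<in> \<F>" for V
    using \<F>(1) that by (simp add: N_def le_imp_less_Suc)
  then have "topspace T \<subseteq> (\<Union>m<N. \<Union>(\<gamma> m))"
    using \<F>(3) stage by blast
  then have "disjoint_refinement_cover (Collect (openin T)) (topspace T) (map \<omega> [0..<N])"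
    unfolding disjoint_refinement_cover_def using \<gamma> by (intro exI[of _ \<gamma>]) auto
  then show ?thesis ..
qed

text \<open>The sets \<open>K \<inter> h -` W\<close> are saturated for \<open>h\<close> on \<open>K\<close>, so their images stay disjoint and are
  relatively open in \<open>h ` K\<close>.\<close>
lemma image_saturated_disjoint_family:
  assumes "\<V> \<subseteq> {K \<inter> h -` W | W. openin Z W}" and "pairwise disjnt \<V>"
  shows "\<forall>V\<in>image h ` \<V>. openin (subtopology Z (h ` K)) V" and "pairwise disjnt (image h ` \<V>)"
proof -
  have image: "h ` (K \<inter> h -` W) = h ` K \<inter> W" for W
    by blast
  show "\<forall>V\<in>image h ` \<V>. openin (subtopology Z (h ` K)) V"
    using assms(1) by (auto simp: image openin_subtopology_Int2)
  have "disjnt (h ` V) (h ` V')" if V: "V \<in> \<V>" "V' \<in> \<V>" "V \<noteq> V'" for V V'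
  proof -
    obtain W W' where "V = K \<inter> h -` W" "V' = K \<inter> h -` W'"
      using assms(1) V by blast
    moreover have "disjnt V V'"
      using assms(2) V unfolding pairwise_def by blast
    ultimately show ?thesis
      unfolding disjnt_def by blast
  qed
  then show "pairwise disjnt (image h ` \<V>)"
    by (intro pairwise_imageI) blast
qed

lemma image_disjoint_refinement_cover:
  assumes "disjoint_refinement_cover {K \<inter> h -` W | W. openin Z W} K \<omega>s"
    and "\<And>m B. m < length \<omega>s \<Longrightarrow> B \<in> \<omega>s ! m \<Longrightarrow> \<exists>U\<in>\<omega> m. h ` B \<subseteq> U"
  shows "\<exists>\<gamma>. (\<forall>n. (\<forall>V\<in>\<gamma> n. openin (subtopology Z (h ` K)) V) \<and> pairwise disjnt (\<gamma> n) \<and>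
               refines (\<gamma> n) (\<omega> n)) \<and> \<Union>(\<Union>n. \<gamma> n) = h ` K"
proof -
  obtain \<gamma> where \<gamma>: "\<And>m. m < length \<omega>s \<Longrightarrow>
      \<gamma> m \<subseteq> {K \<inter> h -` W | W. openin Z W} \<and> pairwise disjnt (\<gamma> m) \<and> refines (\<gamma> m) (\<omega>s ! m)"
    and covers: "K \<subseteq> (\<Union>m < length \<omega>s. \<Union>(\<gamma> m))"
    using assms(1) unfolding disjoint_refinement_cover_def by blast
  define \<gamma>' where "\<gamma>' m = (if m < length \<omega>s then image h ` \<gamma> m else {})" for m
  show ?thesis
  proof (intro exI[of _ \<gamma>'] conjI allI subset_antisym)
    fix m
    show "\<forall>V\<in>\<gamma>' m. openin (subtopology Z (h ` K)) V" and "pairwise disjnt (\<gamma>' m)"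
      using image_saturated_disjoint_family[where \<V>="\<gamma> m" and K=K and h=h and Z=Z] \<gamma>[of m]
      by (simp_all add: \<gamma>'_def)
    show "refines (\<gamma>' m) (\<omega> m)"
      unfolding refines_def
    proof
      fix V' assume "V' \<in> \<gamma>' m"
      then obtain V where m: "m < length \<omega>s" and V: "V \<in> \<gamma> m" "V' = h ` V"
        by (auto simp: \<gamma>'_def split: if_splits)
      then obtain B where "B \<in> \<omega>s ! m" "V \<subseteq> B"
        using \<gamma>[OF m] unfolding refines_def by blast
      then obtain U where "U \<in> \<omega> m" "h ` B \<subseteq> U"
        using assms(2)[OF m] by blast
      then show "\<exists>U\<in>\<omega> m. V' \<subseteq> U"
        using \<open>V \<subseteq> B\<close> V(2) by blast
    qed
  next
    have "V \<subseteq> K" if "m < length \<omega>s" "V \<in> \<gamma> m" for m V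
      using \<gamma> that by blast
    then show "\<Union>(\<Union>n. \<gamma>' n) \<subseteq> h ` K"
      by (auto simp: \<gamma>'_def split: if_splits)
    show "h ` K \<subseteq> \<Union>(\<Union>n. \<gamma>' n)"
    proof
      fix y assume "y \<in> h ` K"
      then obtain x where "x \<in> K" "y = h x"
        by blast
      then obtain m V where "m < length \<omega>s" "V \<in> \<gamma> m" "x \<in> V"
        using covers by blast
      then show "y \<in> \<Union>(\<Union>n. \<gamma>' n)"
        using \<open>y = h x\<close> unfolding \<gamma>'_def by auto
    qed
  qed
qed

section \<open>Refinements by cozero sets\<close>

lemma compactin_finite_pointwise_subcover:
  assumes "compactin X K" and "\<And>x. x \<in> K \<Longrightarrow> openin X (U x) \<and> x \<in> U x"
  shows "\<exists>T. finite T \<and> T \<subseteq> K \<and> K \<subseteq> (\<Union>x\<in>T. U x)"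
proof -
  have "\<And>V. V \<in> U ` K \<Longrightarrow> openin X V" and "K \<subseteq> \<Union>(U ` K)"
    using assms(2) by auto
  from compactinD[OF assms(1) this]
  obtain \<F> where \<F>: "finite \<F>" "\<F> \<subseteq> U ` K" "K \<subseteq> \<Union>\<F>"
    by blast
  then obtain T where "T \<subseteq> K" "finite T" "\<F> = U ` T"
    using finite_subset_image[OF \<F>(1,2)] by blast
  with \<F>(3) show ?thesis
    by (intro exI[of _ T]) auto
qed

lemma completely_regular_bump:
  assumes "completely_regular_space X" and "openin X U" and "x \<in> U"
  obtains \<psi> where "continuous_map X euclideanreal \<psi>" "\<And>y. y \<in> topspace X \<Longrightarrow> 0 \<le> \<psi> y"
    "0 < \<psi> x" "\<And>y. y \<in> topspace X - U \<Longrightarrow> \<psi> y = 0"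
proof -
  have "closedin X (topspace X - U) \<and> x \<in> topspace X - (topspace X - U)"
    using assms(2,3) openin_subset[OF assms(2)] by (auto simp: closedin_diff)
  from assms(1)[unfolded completely_regular_space_def, rule_format, OF this]
  obtain g :: "'a \<Rightarrow> real" where g: "continuous_map X (top_of_set {0..1}) g" "g x = 0"
    "g ` (topspace X - U) \<subseteq> {1}"
    by blast
  have "continuous_map X euclideanreal g"
    using g(1) by (simp add: continuous_map_in_subtopology)
  then have "continuous_map X euclideanreal (\<lambda>y. 1 - g y)"
    by (intro continuous_intros)
  moreover have "g y \<le> 1" if "y \<in> topspace X" for y
    using continuous_map_image_subset_topspace[OF g(1)] that by auto
  ultimately show thesis
    using g(2,3) by (intro that[of "\<lambda>y. 1 - g y"]) auto
qed

lemma finite_bump_subcover: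
  fixes K :: "'a set"
  assumes "completely_regular_space X" and "compactin X K"
    and "\<And>i. i \<in> I \<Longrightarrow> openin (subtopology X K) (U i)" and "K \<subseteq> (\<Union>i\<in>I. U i)"
  obtains T :: "'a set" and idx \<psi> where "finite T" "idx ` T \<subseteq> I"
    "\<forall>t\<in>T. continuous_map X euclideanreal (\<psi> t)" "\<forall>t\<in>T. \<forall>y\<in>topspace X. 0 \<le> \<psi> t y"
    "\<forall>t\<in>T. \<forall>y\<in>K - U (idx t). \<psi> t y = 0" "K \<subseteq> (\<Union>t\<in>T. {y \<in> topspace X. 0 < \<psi> t y})"
proof -
  have K: "K \<subseteq> topspace X"
    using assms(2) by (rule compactin_subset_topspace)
  have "\<exists>i \<psi>. i \<in> I \<and> continuous_map X euclideanreal \<psi> \<and> (\<forall>y\<in>topspace X. 0 \<le> \<psi> y) \<and>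
           0 < \<psi> x \<and> (\<forall>y\<in>K - U i. \<psi> y = 0)" if x: "x \<in> K" for x
  proof -
    obtain i where i: "i \<in> I" "x \<in> U i"
      using assms(4) x by blast
    then obtain V where V: "openin X V" "U i = V \<inter> K"
      using assms(3) by (auto simp: openin_subtopology)
    obtain \<psi> where "continuous_map X euclideanreal \<psi>" "\<And>y. y \<in> topspace X \<Longrightarrow> 0 \<le> \<psi> y"
      "0 < \<psi> x" "\<And>y. y \<in> topspace X - V \<Longrightarrow> \<psi> y = 0"
      using completely_regular_bump[OF assms(1) V(1), of x] i(2) V(2) by blast
    with i V K show ?thesis
      by (intro exI[of _ i] exI[of _ \<psi>]) auto
  qed
  then obtain idx \<psi> where \<psi>: "\<And>x. x \<in> K \<Longrightarrow> idx x \<in> I \<and> continuous_map X euclideanreal (\<psi> x) \<and>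
      (\<forall>y\<in>topspace X. 0 \<le> \<psi> x y) \<and> 0 < \<psi> x x \<and> (\<forall>y\<in>K - U (idx x). \<psi> x y = 0)"
    by metis
  have "openin X {y \<in> topspace X. 0 < \<psi> x y} \<and> x \<in> {y \<in> topspace X. 0 < \<psi> x y}" if "x \<in> K" for x
    using \<psi>[OF that] K that by (auto simp: continuous_map_upper_lower_semicontinuous_lt)
  from compactin_finite_pointwise_subcover[OF assms(2) this]
  obtain T where "finite T" "T \<subseteq> K" "K \<subseteq> (\<Union>t\<in>T. {y \<in> topspace X. 0 < \<psi> t y})"
    by blast
  with \<psi> show thesis
    by (intro that[of T idx \<psi>]) auto
qed

lemma shrink_disjoint_refinement:
  assumes "pairwise disjnt \<V>" and "refines \<V> \<omega>" and "J \<subseteq> \<V>" and "\<And>V. V \<in> J \<Longrightarrow> E V \<subseteq> V"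
  shows "pairwise disjnt (E ` J) \<and> refines (E ` J) \<omega>"
proof
  show "pairwise disjnt (E ` J)"
  proof (rule pairwise_imageI)
    fix V V' assume V: "V \<in> J" "V' \<in> J" "V \<noteq> V'"
    then have "disjnt V V'"
      using assms(1,3) unfolding pairwise_def by blast
    then show "disjnt (E V) (E V')"
      using assms(4) V by (meson disjnt_subset1 disjnt_subset2)
  qed
  show "refines (E ` J) \<omega>"
    unfolding refines_def
  proof
    fix V' assume "V' \<in> E ` J"
    then obtain V where V: "V \<in> J" "V' = E V"
      by blast
    then obtain U where "U \<in> \<omega>" "V \<subseteq> U"
      using assms(2,3) unfolding refines_def by blast
    then show "\<exists>U\<in>\<omega>. V' \<subseteq> U"
      using assms(4) V by blast
  qed
qed

definition cozero_traces :: "'a set \<Rightarrow> ('a \<Rightarrow> real) set \<Rightarrow> 'a set set" where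
  "cozero_traces K P = (\<lambda>\<psi>. K \<inter> {x. 0 < \<psi> x}) ` P"

lemma cozero_disjoint_refinement_cover:
  fixes K :: "'a set"
  assumes "completely_regular_space X" and "compactin X K"
    and "disjoint_refinement_cover (Collect (openin (subtopology X K))) K \<omega>s"
  shows "\<exists>P. finite P \<and> (\<forall>\<psi>\<in>P. continuous_map X euclideanreal \<psi>) \<and>
             disjoint_refinement_cover (cozero_traces K P) K \<omega>s"
proof -
  obtain \<gamma> where \<gamma>: "\<And>m. m < length \<omega>s \<Longrightarrow>
      \<gamma> m \<subseteq> Collect (openin (subtopology X K)) \<and> pairwise disjnt (\<gamma> m) \<and> refines (\<gamma> m) (\<omega>s ! m)"
    and covers: "K \<subseteq> (\<Union>m < length \<omega>s. \<Union>(\<gamma> m))"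
    using assms(3) unfolding disjoint_refinement_cover_def by blast
  define I where "I = {(m, V). m < length \<omega>s \<and> V \<in> \<gamma> m}"
  have opens: "openin (subtopology X K) (snd i)" if i: "i \<in> I" for i
  proof -
    obtain m V where "i = (m, V)" "m < length \<omega>s" "V \<in> \<gamma> m"
      using i by (auto simp: I_def)
    then show ?thesis
      using \<gamma>[of m] by auto
  qed
  have cover_I: "K \<subseteq> (\<Union>i\<in>I. snd i)"
  proof
    fix x assume "x \<in> K"
    then obtain m V where "m < length \<omega>s" "V \<in> \<gamma> m" "x \<in> V"
      using covers by blast
    then show "x \<in> (\<Union>i\<in>I. snd i)"
      by (intro UN_I[of "(m, V)"]) (auto simp: I_def)
  qed
  obtain T :: "'a set" and idx \<psi> where T: "finite T" "idx ` T \<subseteq> I"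
    and \<psi>: "\<forall>t\<in>T. continuous_map X euclideanreal (\<psi> t)" "\<forall>t\<in>T. \<forall>y\<in>topspace X. 0 \<le> \<psi> t y"
      "\<forall>t\<in>T. \<forall>y\<in>K - snd (idx t). \<psi> t y = 0"
    and cover_T: "K \<subseteq> (\<Union>t\<in>T. {y \<in> topspace X. 0 < \<psi> t y})"
    by (rule finite_bump_subcover[OF assms(1,2), of I snd, OF opens cover_I])
  \<comment> \<open>Summing the bumps that belong to the same member of \<open>\<gamma> m\<close> keeps the traces disjoint.\<close>
  define \<Psi> where "\<Psi> i y = (\<Sum>t \<in> {t \<in> T. idx t = i}. \<psi> t y)" for i y
  define \<gamma>' where "\<gamma>' m = (\<lambda>V. K \<inter> {y. 0 < \<Psi> (m, V) y}) ` {V. (m, V) \<in> idx ` T}" for m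
  have trace_sub: "K \<inter> {y. 0 < \<Psi> i y} \<subseteq> snd i" for i
  proof
    fix y assume y: "y \<in> K \<inter> {y. 0 < \<Psi> i y}"
    show "y \<in> snd i"
    proof (rule ccontr)
      assume "y \<notin> snd i"
      then have "\<forall>t \<in> {t \<in> T. idx t = i}. \<psi> t y = 0"
        using \<psi>(3) y by auto
      then have "\<Psi> i y = 0"
        unfolding \<Psi>_def by (rule sum.neutral)
      with y show False
        by simp
    qed
  qed
  have "\<gamma>' m \<subseteq> cozero_traces K (\<Psi> ` idx ` T)" for m
    unfolding \<gamma>'_def cozero_traces_def by (auto intro: rev_image_eqI)
  moreover have "pairwise disjnt (\<gamma>' m) \<and> refines (\<gamma>' m) (\<omega>s ! m)" if m: "m < length \<omega>s" for m
  proof -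
    have "{V. (m, V) \<in> idx ` T} \<subseteq> \<gamma> m"
      using T(2) by (auto simp: I_def)
    then show ?thesis
      unfolding \<gamma>'_def
      by (rule shrink_disjoint_refinement[rotated 2]) (use \<gamma>[OF m] trace_sub[of "(m, _)"] in auto)
  qed
  moreover have "K \<subseteq> (\<Union>m < length \<omega>s. \<Union>(\<gamma>' m))"
  proof
    fix x assume "x \<in> K"
    then obtain t where t: "t \<in> T" "x \<in> topspace X" "0 < \<psi> t x"
      using cover_T by blast
    obtain m V where mV: "idx t = (m, V)"
      using surj_pair[of "idx t"] by blast
    have "0 < \<Psi> (m, V) x"
      unfolding \<Psi>_def using t T(1) \<psi>(2) mV by (intro sum_pos2[of _ t]) auto
    moreover have "m < length \<omega>s"
      using t T(2) mV by (auto simp: I_def)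
    moreover have "K \<inter> {y. 0 < \<Psi> (m, V) y} \<in> \<gamma>' m"
      using t(1) mV unfolding \<gamma>'_def by (intro rev_image_eqI[of V]) force+
    ultimately show "x \<in> (\<Union>m < length \<omega>s. \<Union>(\<gamma>' m))"
      using \<open>x \<in> K\<close> by blast
  qed
  ultimately have "disjoint_refinement_cover (cozero_traces K (\<Psi> ` idx ` T)) K \<omega>s"
    unfolding disjoint_refinement_cover_def by (intro exI[of _ \<gamma>']) auto
  moreover have "continuous_map X euclideanreal (\<Psi> i)" for i
    unfolding \<Psi>_def[abs_def] using \<psi>(1) T(1) by (intro continuous_map_sum) auto
  ultimately show ?thesis
    using T(1) by (intro exI[of _ "\<Psi> ` idx ` T"]) auto
qed

lemma countable_closure:
  assumes "countable A" and "A \<subseteq> F"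
    and G: "\<And>S. finite S \<Longrightarrow> S \<subseteq> F \<Longrightarrow> countable (G S) \<and> G S \<subseteq> F"
  shows "\<exists>\<Phi>. A \<subseteq> \<Phi> \<and> \<Phi> \<subseteq> F \<and> countable \<Phi> \<and> (\<forall>S. finite S \<and> S \<subseteq> \<Phi> \<longrightarrow> G S \<subseteq> \<Phi>)"
proof -
  define stage where "stage = rec_nat A (\<lambda>_ B. B \<union> (\<Union>S \<in> {S. finite S \<and> S \<subseteq> B}. G S))"
  have stage_0: "stage 0 = A"
    and stage_Suc: "stage (Suc m) = stage m \<union> (\<Union>S \<in> {S. finite S \<and> S \<subseteq> stage m}. G S)" for m
    by (simp_all add: stage_def)
  have stage: "stage m \<subseteq> F \<and> countable (stage m)" for m
  proof (induction m)
    case (Suc m)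
    then have "countable (\<Union>S \<in> {S. finite S \<and> S \<subseteq> stage m}. G S)"
      using G by (intro countable_UN countable_Collect_finite_subset) auto
    with Suc show ?case
      using G by (auto simp: stage_Suc)
  qed (simp add: stage_0 assms)
  have "incseq stage"
    by (rule incseq_SucI) (simp add: stage_Suc)
  have finite_in_stage: "\<exists>m. S \<subseteq> stage m" if "finite S" "S \<subseteq> (\<Union>m. stage m)" for S
    using that
  proof (induction S rule: finite_induct)
    case (insert x S)
    then obtain m m' where "S \<subseteq> stage m" "x \<in> stage m'"
      by blast
    then have "insert x S \<subseteq> stage (max m m')"
      using incseqD[OF \<open>incseq stage\<close>, of m "max m m'"] incseqD[OF \<open>incseq stage\<close>, of m' "max m m'"]
      by auto
    then show ?case ..
  qed simp
  have "G S \<subseteq> (\<Union>m. stage m)" if S: "finite S" "S \<subseteq> (\<Union>m. stage m)" for S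
  proof -
    obtain m where "S \<subseteq> stage m"
      using finite_in_stage[OF S] by blast
    then have "G S \<subseteq> stage (Suc m)"
      using \<open>finite S\<close> by (auto simp: stage_Suc)
    then show ?thesis
      by blast
  qed
  moreover have "A \<subseteq> (\<Union>m. stage m)"
    using stage_0 by blast
  moreover have "(\<Union>m. stage m) \<subseteq> F" and "countable (\<Union>m. stage m)"
    using stage by auto
  ultimately show ?thesis
    by (intro exI[of _ "\<Union>m. stage m"]) blast
qed

lemma finite_support_of_list:
  assumes "set xs \<subseteq> {C S k | S k. finite S \<and> S \<subseteq> \<Phi>}"
  shows "\<exists>S. finite S \<and> S \<subseteq> \<Phi> \<and> set xs \<subseteq> {C S' k | S' k. S' \<subseteq> S}"
  using assms
proof (induction xs)
  case (Cons x xs)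
  then obtain S S' k where "finite S" "S \<subseteq> \<Phi>" "set xs \<subseteq> {C S'' k | S'' k. S'' \<subseteq> S}"
    and "finite S'" "S' \<subseteq> \<Phi>" "x = C S' k"
    by auto
  then have "set (x # xs) \<subseteq> {C S'' k | S'' k. S'' \<subseteq> S \<union> S'}"
    by fastforce
  with \<open>finite S\<close> \<open>finite S'\<close> \<open>S \<subseteq> \<Phi>\<close> \<open>S' \<subseteq> \<Phi>\<close> show ?case
    by (intro exI[of _ "S \<union> S'"]) simp
qed (intro exI[of _ "{}"], simp)

lemma countable_subset_indexed:
  assumes "finite S"
  shows "countable {C S' (k :: nat) | S' k. S' \<subseteq> S}"
proof -
  have "{C S' k | S' k. S' \<subseteq> S} = (\<lambda>(S', k). C S' k) ` (Pow S \<times> UNIV)"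
    by auto
  moreover have "countable (Pow S \<times> (UNIV :: nat set))"
    using assms by (simp add: countable_finite)
  ultimately show ?thesis
    by simp
qed

lemma countable_realizing_family:
  fixes C :: "nat \<Rightarrow> ('a \<Rightarrow> real) set \<Rightarrow> nat \<Rightarrow> 'a set set"
  assumes "completely_regular_space X" and K: "\<And>n. compactin X (K n)"
  shows "\<exists>\<Phi>. countable \<Phi> \<and> \<Phi> \<noteq> {} \<and> (\<forall>\<psi>\<in>\<Phi>. continuous_map X euclideanreal \<psi>) \<and>
    (\<forall>n \<omega>s. set \<omega>s \<subseteq> {C n S k | S k. finite S \<and> S \<subseteq> \<Phi>} \<longrightarrow>
       disjoint_refinement_cover (Collect (openin (subtopology X (K n)))) (K n) \<omega>s \<longrightarrow>
       disjoint_refinement_cover (cozero_traces (K n) \<Phi>) (K n) \<omega>s)"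
proof -
  define F where "F = {\<psi>. continuous_map X euclideanreal \<psi>}"
  define refinable where
    "refinable n \<omega>s \<longleftrightarrow> disjoint_refinement_cover (Collect (openin (subtopology X (K n)))) (K n) \<omega>s"
    for n \<omega>s
  define realizer where "realizer n \<omega>s =
    (SOME P. finite P \<and> P \<subseteq> F \<and> disjoint_refinement_cover (cozero_traces (K n) P) (K n) \<omega>s)" for n \<omega>s
  have realizer: "finite (realizer n \<omega>s) \<and> realizer n \<omega>s \<subseteq> F \<and>
      disjoint_refinement_cover (cozero_traces (K n) (realizer n \<omega>s)) (K n) \<omega>s"
    if refinable: "refinable n \<omega>s" for n \<omega>s
  proof -
    obtain P where "finite P" "\<forall>\<psi>\<in>P. continuous_map X euclideanreal \<psi>"
      "disjoint_refinement_cover (cozero_traces (K n) P) (K n) \<omega>s"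
      using cozero_disjoint_refinement_cover[OF assms(1) K refinable[unfolded refinable_def]] by blast
    then have "\<exists>P. finite P \<and> P \<subseteq> F \<and> disjoint_refinement_cover (cozero_traces (K n) P) (K n) \<omega>s"
      by (intro exI[of _ P]) (auto simp: F_def)
    then show ?thesis
      unfolding realizer_def by (rule someI_ex)
  qed
  define requests where "requests n S = {\<omega>s \<in> lists {C n S' k | S' k. S' \<subseteq> S}. refinable n \<omega>s}" for n S
  define G where "G S = (\<Union>n. \<Union>\<omega>s \<in> requests n S. realizer n \<omega>s)" for S
  have "countable (G S) \<and> G S \<subseteq> F" if "finite S" for S
  proof -
    have "countable (requests n S)" for n
      unfolding requests_def
      by (rule countable_subset[OF _ countable_lists[OF countable_subset_indexed[where C="C n", OF that]]]) auto
    then have "countable (G S)"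
      unfolding G_def requests_def
      by (intro countable_UN) (use realizer in \<open>auto intro: countable_finite\<close>)
    moreover have "G S \<subseteq> F"
      unfolding G_def requests_def using realizer by blast
    ultimately show ?thesis ..
  qed
  then obtain \<Phi> where \<Phi>: "{\<lambda>_. 0} \<subseteq> \<Phi>" "\<Phi> \<subseteq> F" "countable \<Phi>"
    and closed: "\<And>S. finite S \<Longrightarrow> S \<subseteq> \<Phi> \<Longrightarrow> G S \<subseteq> \<Phi>"
    using countable_closure[of "{\<lambda>_. 0}" F G] by (auto simp: F_def)
  have "disjoint_refinement_cover (cozero_traces (K n) \<Phi>) (K n) \<omega>s"
    if \<omega>s: "set \<omega>s \<subseteq> {C n S k | S k. finite S \<and> S \<subseteq> \<Phi>}" and "refinable n \<omega>s" for n \<omega>s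
  proof -
    obtain S where "finite S" "S \<subseteq> \<Phi>" "set \<omega>s \<subseteq> {C n S' k | S' k. S' \<subseteq> S}"
      using finite_support_of_list[where C="C n", OF \<omega>s] by blast
    then have "\<omega>s \<in> requests n S"
      using \<open>refinable n \<omega>s\<close> unfolding requests_def by (auto simp: in_lists_conv_set)
    then have "realizer n \<omega>s \<subseteq> G S"
      unfolding G_def by blast
    then have "realizer n \<omega>s \<subseteq> \<Phi>"
      using closed \<open>finite S\<close> \<open>S \<subseteq> \<Phi>\<close> by blast
    then show ?thesis
      using realizer[OF \<open>refinable n \<omega>s\<close>]
      by (auto simp: cozero_traces_def elim!: disjoint_refinement_cover_mono)
  qed
  with \<Phi> show ?thesis
    by (intro exI[of _ \<Phi>]) (auto simp: F_def refinable_def)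
qed

section \<open>The metric quotient of a pseudometric\<close>

locale pseudometric =
  fixes A :: "'a set" and \<rho> :: "'a \<Rightarrow> 'a \<Rightarrow> real"
  assumes nonneg: "0 \<le> \<rho> x y"
    and refl: "x \<in> A \<Longrightarrow> \<rho> x x = 0"
    and commute: "\<rho> x y = \<rho> y x"
    and triangle: "\<lbrakk>x \<in> A; y \<in> A; z \<in> A\<rbrakk> \<Longrightarrow> \<rho> x z \<le> \<rho> x y + \<rho> y z"
begin

definition eqclass :: "'a \<Rightarrow> 'a set" where
  "eqclass x = {y \<in> A. \<rho> x y = 0}"

definition rep :: "'a set \<Rightarrow> 'a" where
  "rep P = (SOME x. x \<in> P)"

definition quot_dist :: "'a set \<Rightarrow> 'a set \<Rightarrow> real" where
  "quot_dist P Q = \<rho> (rep P) (rep Q)"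

lemma dist_eq_0_cong:
  assumes "x \<in> A" "x' \<in> A" "y \<in> A" "\<rho> x x' = 0"
  shows "\<rho> x y = \<rho> x' y"
  using triangle[of x x' y] triangle[of x' x y] commute[of x x'] assms by linarith

lemma rep_eqclass:
  assumes "x \<in> A"
  shows "rep (eqclass x) \<in> A" and "\<rho> x (rep (eqclass x)) = 0"
proof -
  have "x \<in> eqclass x"
    using assms by (simp add: eqclass_def refl)
  then have "rep (eqclass x) \<in> eqclass x"
    unfolding rep_def by (rule someI)
  then show "rep (eqclass x) \<in> A" "\<rho> x (rep (eqclass x)) = 0"
    by (simp_all add: eqclass_def)
qed

lemma eqclass_eq_iff:
  assumes "x \<in> A" and "y \<in> A"
  shows "eqclass x = eqclass y \<longleftrightarrow> \<rho> x y = 0"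
proof
  assume "eqclass x = eqclass y"
  moreover have "y \<in> eqclass y"
    using assms(2) by (simp add: eqclass_def refl)
  ultimately have "y \<in> eqclass x"
    by simp
  then show "\<rho> x y = 0"
    by (simp add: eqclass_def)
next
  assume "\<rho> x y = 0"
  then show "eqclass x = eqclass y"
    using dist_eq_0_cong[of x y] assms by (auto simp: eqclass_def)
qed

lemma quot_dist_eqclass [simp]:
  assumes "x \<in> A" "y \<in> A"
  shows "quot_dist (eqclass x) (eqclass y) = \<rho> x y"
proof -
  have "\<rho> (rep (eqclass x)) (rep (eqclass y)) = \<rho> x (rep (eqclass y))"
    using dist_eq_0_cong[of x "rep (eqclass x)" "rep (eqclass y)"] rep_eqclass assms by (simp add: commute)
  also have "\<dots> = \<rho> x y"
    using dist_eq_0_cong[of y "rep (eqclass y)" x] rep_eqclass[OF assms(2)] assms by (simp add: commute)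
  finally show ?thesis
    by (simp add: quot_dist_def)
qed

sublocale quot: Metric_space "eqclass ` A" quot_dist
proof
  fix P Q R assume "P \<in> eqclass ` A" "Q \<in> eqclass ` A" "R \<in> eqclass ` A"
  then show "quot_dist P R \<le> quot_dist P Q + quot_dist Q R"
    by (auto simp: triangle)
next
  fix P Q assume "P \<in> eqclass ` A" "Q \<in> eqclass ` A"
  then obtain x y where "x \<in> A" "y \<in> A" "P = eqclass x" "Q = eqclass y"
    by blast
  then show "quot_dist P Q = 0 \<longleftrightarrow> P = Q"
    by (simp add: eqclass_eq_iff)
qed (auto simp: quot_dist_def nonneg commute)

lemma rep_in: "P \<in> eqclass ` A \<Longrightarrow> rep P \<in> A"
  using rep_eqclass by blast

lemma continuous_map_eqclass:
  assumes "topspace X \<subseteq> A"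
    and "\<And>x \<epsilon>. x \<in> topspace X \<Longrightarrow> 0 < \<epsilon> \<Longrightarrow> \<exists>U. openin X U \<and> x \<in> U \<and> (\<forall>y\<in>U. \<rho> x y < \<epsilon>)"
  shows "continuous_map X quot.mtopology eqclass"
  unfolding quot.continuous_map_to_metric
proof (intro ballI allI impI)
  fix x and \<epsilon> :: real assume "x \<in> topspace X" "0 < \<epsilon>"
  then obtain U where U: "openin X U" "x \<in> U" "\<forall>y\<in>U. \<rho> x y < \<epsilon>"
    using assms(2) by blast
  have "eqclass y \<in> quot.mball (eqclass x) \<epsilon>" if "y \<in> U" for y
  proof -
    have "x \<in> A" "y \<in> A"
      using that openin_subset[OF U(1)] assms(1) \<open>x \<in> topspace X\<close> by auto
    with U that show ?thesis
      by simp
  qed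
  with U show "\<exists>U. openin X U \<and> x \<in> U \<and> (\<forall>y\<in>U. eqclass y \<in> quot.mball (eqclass x) \<epsilon>)"
    by blast
qed

lemma continuous_map_comp_rep:
  assumes "Metric_space M' d'" and "\<And>x. x \<in> A \<Longrightarrow> F x \<in> M'"
    and "\<And>x \<epsilon>. x \<in> A \<Longrightarrow> 0 < \<epsilon> \<Longrightarrow> \<exists>\<delta>>0. \<forall>y\<in>A. \<rho> x y < \<delta> \<longrightarrow> d' (F x) (F y) < \<epsilon>"
  shows "continuous_map quot.mtopology (Metric_space.mtopology M' d') (F \<circ> rep)"
  unfolding Metric_space.continuous_map_to_metric[OF assms(1)]
proof (intro ballI allI impI)
  fix P and \<epsilon> :: real assume "P \<in> topspace quot.mtopology" "0 < \<epsilon>"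
  then have P: "rep P \<in> A" "P \<in> eqclass ` A"
    using rep_in by auto
  then obtain \<delta> where "0 < \<delta>" and \<delta>: "\<forall>y\<in>A. \<rho> (rep P) y < \<delta> \<longrightarrow> d' (F (rep P)) (F y) < \<epsilon>"
    using assms(3) \<open>0 < \<epsilon>\<close> by blast
  have "(F \<circ> rep) Q \<in> Metric_space.mball M' d' ((F \<circ> rep) P) \<epsilon>" if "Q \<in> quot.mball P \<delta>" for Q
    using that \<delta> P rep_in assms(2) by (auto simp: quot_dist_def Metric_space.in_mball[OF assms(1)])
  then show "\<exists>U. openin quot.mtopology U \<and> P \<in> U \<and>
      (\<forall>Q\<in>U. (F \<circ> rep) Q \<in> Metric_space.mball M' d' ((F \<circ> rep) P) \<epsilon>)"
    using P \<open>0 < \<delta>\<close> by (intro exI[of _ "quot.mball P \<delta>"]) auto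
qed

end

section \<open>The quotient space of the factorization\<close>

lemma (in Metric_space) lebesgue_number_subtopology:
  assumes "compactin mtopology L" and "\<forall>U\<in>\<U>. openin (subtopology mtopology L) U" and "L \<subseteq> \<Union>\<U>"
  shows "\<exists>\<delta>>0. \<forall>x\<in>L. \<exists>U\<in>\<U>. mball x \<delta> \<inter> L \<subseteq> U"
proof -
  have "L \<subseteq> M"
    using compactin_subset_topspace[OF assms(1)] by simp
  then interpret L: Submetric M d L
    by unfold_locales
  have "compactin L.sub.mtopology L"
    using assms(1) by (simp add: L.mtopology_submetric compactin_subtopology)
  moreover have "\<And>U. U \<in> \<U> \<Longrightarrow> openin L.sub.mtopology U"
    using assms(2) by (simp add: L.mtopology_submetric)
  ultimately obtain \<delta> where "\<delta> > 0" "\<forall>x\<in>L. \<exists>U\<in>\<U>. L.sub.mball x \<delta> \<subseteq> U"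
    using L.sub.lebesgue_number[OF _ assms(3)] by blast
  then show ?thesis
    by (intro exI[of _ \<delta>]) (auto simp: L.mball_submetric_eq Int_commute)
qed

definition ball_cover ::
    "('b \<Rightarrow> 'b \<Rightarrow> real) \<Rightarrow> ('a \<Rightarrow> 'b) \<Rightarrow> 'a set \<Rightarrow> ('a \<Rightarrow> real) set \<Rightarrow> nat \<Rightarrow> 'a set set" where
  "ball_cover d f K S k = (\<lambda>c. K \<inter> {y. d (f c) (f y) + (\<Sum>\<psi>\<in>S. \<bar>\<psi> c - \<psi> y\<bar>) < (1/2)^k}) ` K"

lemma exists_rat_between: "x < y \<Longrightarrow> \<exists>q::rat. x < of_rat q \<and> of_rat q < (y::real)"
  by (metis Rats_cases Rats_dense_in_real)

lemma rat_list_approximation: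
  assumes "0 < (r :: real)"
  shows "\<exists>qs :: rat list. length qs = j \<and> (\<forall>i < j. \<bar>a i - of_rat (qs ! i)\<bar> < r)"
proof -
  have "\<exists>q::rat. \<bar>a i - of_rat q\<bar> < r" for i
  proof -
    obtain q :: rat where "a i - r < of_rat q" "of_rat q < a i"
      using exists_rat_between[of "a i - r" "a i"] assms by auto
    then show ?thesis
      by (intro exI[of _ q]) auto
  qed
  then obtain q :: "nat \<Rightarrow> rat" where "\<And>i. \<bar>a i - of_rat (q i)\<bar> < r"
    by metis
  then show ?thesis
    by (intro exI[of _ "map q [0..<j]"]) simp
qed

locale quotient_factorization = Metric_space M d
  for M :: "'b set" and d +
  fixes X :: "'a topology" and f :: "'a \<Rightarrow> 'b" and \<phi> :: "nat \<Rightarrow> 'a \<Rightarrow> real"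
  assumes continuous_f: "continuous_map X mtopology f"
    and continuous_\<phi>: "\<And>i. continuous_map X euclideanreal (\<phi> i)"
begin

definition pdist :: "'a \<Rightarrow> 'a \<Rightarrow> real" where
  "pdist x y = d (f x) (f y) + series_dist \<phi> x y"

lemma f_in_M: "x \<in> topspace X \<Longrightarrow> f x \<in> M"
  using continuous_map_image_subset_topspace[OF continuous_f] by auto

sublocale Q: pseudometric "topspace X" pdist
proof
  fix x y z assume "x \<in> topspace X" "y \<in> topspace X" "z \<in> topspace X"
  then show "pdist x z \<le> pdist x y + pdist y z"
    using triangle[of "f x" "f y" "f z"] series_dist_triangle[of \<phi> x z y] f_in_M
    unfolding pdist_def by fastforce
qed (auto simp: pdist_def f_in_M series_dist_nonneg commute series_dist_commute)

abbreviation Z :: "'a set topology" where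
  "Z \<equiv> Q.quot.mtopology"

lemma d_le_pdist: "d (f x) (f y) \<le> pdist x y"
  by (simp add: pdist_def series_dist_nonneg)

lemma pdist_le:
  assumes "\<And>i. i < j \<Longrightarrow> \<bar>\<phi> i x - \<phi> i y\<bar> \<le> b" and "0 \<le> b"
  shows "pdist x y \<le> d (f x) (f y) + 2 * b + 2 * (1/2)^j"
  using series_dist_le[where \<phi>=\<phi> and x=x and y=y, OF assms] by (simp add: pdist_def)

lemma f_rep_eqclass:
  assumes "x \<in> topspace X"
  shows "f (Q.rep (Q.eqclass x)) = f x"
proof -
  have "d (f x) (f (Q.rep (Q.eqclass x))) = 0"
    using Q.rep_eqclass[OF assms] d_le_pdist[of x "Q.rep (Q.eqclass x)"] nonneg by (metis antisym)
  then show ?thesis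
    using Q.rep_eqclass[OF assms] assms f_in_M by simp
qed

lemma \<phi>_rep_eqclass: "x \<in> topspace X \<Longrightarrow> \<phi> i (Q.rep (Q.eqclass x)) = \<phi> i x"
  using Q.rep_eqclass[of x] series_dist_eq_0_imp[of \<phi> x "Q.rep (Q.eqclass x)" i]
  by (simp add: pdist_def add_nonneg_eq_0_iff series_dist_nonneg)

lemma continuous_map_eqclass: "continuous_map X Z Q.eqclass"
proof (rule Q.continuous_map_eqclass)
  fix x and \<epsilon> :: real assume x: "x \<in> topspace X" and "0 < \<epsilon>"
  then obtain j where j: "(1/2::real)^j < \<epsilon>/6"
    using real_arch_pow_inv[of "\<epsilon>/6" "1/2::real"] by auto
  define U where "U = {y \<in> topspace X. f y \<in> mball (f x) (\<epsilon>/3)} \<inter>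
      ((\<Inter>i<j. {y \<in> topspace X. \<phi> i y \<in> ball (\<phi> i x) (\<epsilon>/6)}) \<inter> topspace X)"
  have "openin X U"
    unfolding U_def
    by (intro openin_Int openin_INT openin_continuous_map_preimage[OF continuous_f]
        openin_continuous_map_preimage[OF continuous_\<phi>]) auto
  moreover have "x \<in> U"
    using x \<open>0 < \<epsilon>\<close> f_in_M by (auto simp: U_def)
  moreover have "pdist x y < \<epsilon>" if "y \<in> U" for y
  proof -
    have "\<bar>\<phi> i x - \<phi> i y\<bar> \<le> \<epsilon>/6" if "i < j" for i
    proof -
      have "\<phi> i y \<in> ball (\<phi> i x) (\<epsilon>/6)"
        using \<open>y \<in> U\<close> that unfolding U_def by blast
      then show ?thesis
        by (simp add: dist_real_def)
    qed
    then have "pdist x y \<le> d (f x) (f y) + 2 * (\<epsilon>/6) + 2 * (1/2)^j"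
      using \<open>0 < \<epsilon>\<close> by (intro pdist_le) auto
    moreover have "d (f x) (f y) < \<epsilon>/3"
      using \<open>y \<in> U\<close> by (auto simp: U_def)
    ultimately show ?thesis
      using j by linarith
  qed
  ultimately show "\<exists>U. openin X U \<and> x \<in> U \<and> (\<forall>y\<in>U. pdist x y < \<epsilon>)"
    by blast
qed simp

lemma continuous_map_f_rep: "continuous_map Z mtopology (f \<circ> Q.rep)"
proof (rule Q.continuous_map_comp_rep[OF Metric_space_axioms f_in_M])
  fix x and \<epsilon> :: real assume "0 < \<epsilon>"
  then show "\<exists>\<delta>>0. \<forall>y\<in>topspace X. pdist x y < \<delta> \<longrightarrow> d (f x) (f y) < \<epsilon>"
    using d_le_pdist by (meson order_le_less_trans)
qed

lemma continuous_map_\<phi>_rep: "continuous_map Z euclideanreal (\<phi> i \<circ> Q.rep)"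
proof -
  have "continuous_map Z Met_TC.mtopology (\<phi> i \<circ> Q.rep)"
  proof (rule Q.continuous_map_comp_rep[OF Met_TC.Metric_space_axioms])
    fix x and \<epsilon> :: real assume "0 < \<epsilon>"
    have "dist (\<phi> i x) (\<phi> i y) < \<epsilon>" if "pdist x y < (1/2)^i * min 1 \<epsilon>" for y
    proof -
      have "(1/2)^i * min 1 \<bar>\<phi> i x - \<phi> i y\<bar> < (1/2)^i * min 1 \<epsilon>"
        using that series_dist_term_le[of i \<phi> x y] d_le_pdist[of x y] nonneg[of "f x" "f y"]
        unfolding pdist_def by linarith
      then show ?thesis
        by (auto simp: dist_real_def min_def split: if_splits)
    qed
    then show "\<exists>\<delta>>0. \<forall>y\<in>topspace X. pdist x y < \<delta> \<longrightarrow> dist (\<phi> i x) (\<phi> i y) < \<epsilon>"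
      using \<open>0 < \<epsilon>\<close> by (intro exI[of _ "(1/2)^i * min 1 \<epsilon>"]) auto
  qed auto
  then show ?thesis
    by simp
qed

lemma factorization_quotient:
  assumes "weight_le Z mtopology"
  shows "factorization X mtopology f Z Q.eqclass (f \<circ> Q.rep)"
  unfolding factorization_def
proof (intro conjI ballI impI continuous_map_eqclass continuous_map_f_rep assms)
  show "f x = (f \<circ> Q.rep) (Q.eqclass x)" if "x \<in> topspace X" for x
    using that by (simp add: f_rep_eqclass)
  then have "(f \<circ> Q.rep) ` topspace Z = f ` topspace X"
    by (auto simp: image_image)
  then show "(f \<circ> Q.rep) ` topspace Z = topspace mtopology" if "f ` topspace X = topspace mtopology"
    using that by simp
qed

definition basic_open :: "'b set \<Rightarrow> rat list \<Rightarrow> rat \<Rightarrow> 'a set set" where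
  "basic_open U qs r = {P \<in> topspace Z. f (Q.rep P) \<in> U \<and>
     (\<forall>i < length qs. \<bar>\<phi> i (Q.rep P) - of_rat (qs ! i)\<bar> < of_rat r)}"

lemma openin_basic_open:
  assumes "openin mtopology U"
  shows "openin Z (basic_open U qs r)"
proof -
  have "basic_open U qs r = {P \<in> topspace Z. (f \<circ> Q.rep) P \<in> U} \<inter>
      ((\<Inter>i < length qs. {P \<in> topspace Z. (\<phi> i \<circ> Q.rep) P \<in> ball (of_rat (qs ! i)) (of_rat r)}) \<inter>
       topspace Z)"
    by (auto simp: basic_open_def dist_real_def abs_minus_commute)
  then show ?thesis
    using assms
    by (simp only:) (intro openin_Int openin_INT openin_continuous_map_preimage[OF continuous_map_f_rep]
        openin_continuous_map_preimage[OF continuous_map_\<phi>_rep]; simp)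
qed

lemma basic_open_local_base:
  assumes "is_base_of mtopology \<B>" and "openin Z S" and "P \<in> S"
  shows "\<exists>U\<in>\<B>. \<exists>qs r. P \<in> basic_open U qs r \<and> basic_open U qs r \<subseteq> S"
proof -
  obtain \<epsilon> where "0 < \<epsilon>" and \<epsilon>: "Q.quot.mball P \<epsilon> \<subseteq> S"
    using assms(2,3) unfolding Q.quot.openin_mtopology by auto
  have P: "P \<in> topspace Z"
    using openin_subset[OF assms(2)] assms(3) by blast
  define x where "x = Q.rep P"
  have x: "x \<in> topspace X"
    using P Q.rep_in by (simp add: x_def)
  obtain j where j: "(1/2::real)^j < \<epsilon>/8"
    using real_arch_pow_inv[of "\<epsilon>/8" "1/2::real"] \<open>0 < \<epsilon>\<close> by auto
  have "openin mtopology (mball (f x) (\<epsilon>/4)) \<and> f x \<in> mball (f x) (\<epsilon>/4)"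
    using f_in_M[OF x] \<open>0 < \<epsilon>\<close> by simp
  from assms(1)[unfolded is_base_of_iff_local, THEN conjunct2, rule_format, OF this]
  obtain U where U: "U \<in> \<B>" "f x \<in> U" "U \<subseteq> mball (f x) (\<epsilon>/4)"
    by blast
  obtain r :: rat where r: "0 < (of_rat r :: real)" "of_rat r < \<epsilon>/8"
    using exists_rat_between[of 0 "\<epsilon>/8"] \<open>0 < \<epsilon>\<close> by auto
  obtain qs where qs: "length qs = j" "\<And>i. i < j \<Longrightarrow> \<bar>\<phi> i x - of_rat (qs ! i)\<bar> < of_rat r"
    using rat_list_approximation[OF r(1), of j "\<lambda>i. \<phi> i x"] by blast
  have "P \<in> basic_open U qs r"
    using P U(2) qs by (auto simp: basic_open_def x_def)
  moreover have "basic_open U qs r \<subseteq> S"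
  proof
    fix P' assume P': "P' \<in> basic_open U qs r"
    define y where "y = Q.rep P'"
    have "\<bar>\<phi> i x - \<phi> i y\<bar> \<le> \<epsilon>/4" if "i < j" for i
    proof -
      have "\<bar>\<phi> i y - of_rat (qs ! i)\<bar> < of_rat r"
        using P' that qs(1) by (auto simp: basic_open_def y_def)
      then show ?thesis
        using qs(2)[OF that] r(2) by linarith
    qed
    then have "pdist x y \<le> d (f x) (f y) + 2 * (\<epsilon>/4) + 2 * (1/2)^j"
      using \<open>0 < \<epsilon>\<close> by (intro pdist_le) auto
    moreover have "d (f x) (f y) < \<epsilon>/4"
      using P' U(3) by (auto simp: basic_open_def y_def)
    ultimately have "Q.quot_dist P P' < \<epsilon>"
      using j by (simp add: Q.quot_dist_def x_def y_def)
    then show "P' \<in> S"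
      using \<epsilon> P P' by (auto simp: basic_open_def)
  qed
  ultimately show ?thesis
    using U(1) by blast
qed

lemma weight_le_quotient:
  assumes "infinite M"
  shows "weight_le Z mtopology"
  unfolding weight_le_def
proof (intro allI impI)
  fix \<B> assume \<B>: "is_base_of mtopology \<B>"
  define \<B>' where "\<B>' = (\<lambda>(U, qs, r). basic_open U qs r) ` (\<B> \<times> (UNIV :: (rat list \<times> rat) set))"
  have "is_base_of Z \<B>'"
    unfolding is_base_of_iff_local
  proof (intro conjI allI impI ballI)
    show "openin Z B" if "B \<in> \<B>'" for B
      using that \<B> openin_basic_open unfolding \<B>'_def is_base_of_def by auto
    fix S P assume "openin Z S \<and> P \<in> S"
    then obtain U qs r where "U \<in> \<B>" "P \<in> basic_open U qs r" "basic_open U qs r \<subseteq> S"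
      using basic_open_local_base[OF \<B>] by blast
    moreover have "basic_open U qs r \<in> \<B>'"
      unfolding \<B>'_def using \<open>U \<in> \<B>\<close> by (intro rev_image_eqI[of "(U, qs, r)"]) auto
    ultimately show "\<exists>B\<in>\<B>'. P \<in> B \<and> B \<subseteq> S"
      by blast
  qed
  have "infinite \<B>"
    using infinite_base_of_t1_space[OF \<B>] Hausdorff_imp_t1_space[OF Hausdorff_space_mtopology] assms
    by simp
  have "|UNIV :: (rat list \<times> rat) set| \<le>o |UNIV :: nat set|"
    unfolding card_of_ordLeq[symmetric] by (intro exI[of _ to_nat]) auto
  also have "|UNIV :: nat set| \<le>o |\<B>|"
    using \<open>infinite \<B>\<close> infinite_iff_card_of_nat by blast
  finally have "|\<B> \<times> (UNIV :: (rat list \<times> rat) set)| =o |\<B>|"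
    using \<open>infinite \<B>\<close> by (intro card_of_Times_infinite_simps(1)) auto
  then have "|\<B>'| \<le>o |\<B>|"
    unfolding \<B>'_def by (rule ordLeq_ordIso_trans[OF card_of_image])
  with \<open>is_base_of Z \<B>'\<close> show "\<exists>\<B>'. is_base_of Z \<B>' \<and> |\<B>'| \<le>o |\<B>|"
    by blast
qed

lemma weight_le_quotient_trivial:
  assumes "\<And>i x. \<phi> i x = 0"
  shows "weight_le Z mtopology"
  unfolding weight_le_def
proof (intro allI impI)
  fix \<B> assume \<B>: "is_base_of mtopology \<B>"
  define \<B>' where "\<B>' = (\<lambda>U. basic_open U [] 0) ` \<B>"
  have "is_base_of Z \<B>'"
    unfolding is_base_of_iff_local
  proof (intro conjI allI impI ballI)
    show "openin Z B" if "B \<in> \<B>'" for B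
      using that \<B> openin_basic_open unfolding \<B>'_def is_base_of_def by auto
    fix S P assume "openin Z S \<and> P \<in> S"
    then obtain U qs r where "U \<in> \<B>" "P \<in> basic_open U qs r" "basic_open U qs r \<subseteq> S"
      using basic_open_local_base[OF \<B>] by blast
    moreover have "basic_open U [] 0 = basic_open U qs r" if "P \<in> basic_open U qs r"
      using that by (auto simp: basic_open_def assms)
    ultimately show "\<exists>B\<in>\<B>'. P \<in> B \<and> B \<subseteq> S"
      unfolding \<B>'_def by auto
  qed
  moreover have "|\<B>'| \<le>o |\<B>|"
    unfolding \<B>'_def by (rule card_of_image)
  ultimately show "\<exists>\<B>'. is_base_of Z \<B>' \<and> |\<B>'| \<le>o |\<B>|"
    by blast
qed

lemma finite_quotient_trivial:
  assumes "\<And>i x. \<phi> i x = 0" and "finite M"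
  shows "finite (topspace Z)"
proof -
  have "pdist x y = d (f x) (f y)" for x y
    by (simp add: pdist_def series_dist_def assms)
  have "inj_on (f \<circ> Q.rep) (topspace Z)"
  proof (rule inj_onI)
    fix P P' assume "P \<in> topspace Z" "P' \<in> topspace Z" "(f \<circ> Q.rep) P = (f \<circ> Q.rep) P'"
    then obtain x y where "x \<in> topspace X" "y \<in> topspace X" "P = Q.eqclass x" "P' = Q.eqclass y" "f x = f y"
      by (auto simp: f_rep_eqclass)
    then show "P = P'"
      by (simp add: Q.eqclass_eq_iff \<open>\<And>x y. pdist x y = d (f x) (f y)\<close> f_in_M)
  qed
  moreover have "(f \<circ> Q.rep) ` topspace Z \<subseteq> M"
    using f_in_M Q.rep_in by auto
  ultimately show ?thesis
    using assms(2) finite_imageD finite_subset by blast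
qed

lemma continuous_map_dist_f:
  assumes "c \<in> topspace X"
  shows "continuous_map X euclideanreal (\<lambda>y. d (f c) (f y))"
proof -
  have "continuous_map X (mtopology_of (metric (M, d))) (\<lambda>y. f c)"
    using f_in_M[OF assms] by simp
  moreover have "continuous_map X (mtopology_of (metric (M, d))) f"
    using continuous_f by simp
  ultimately show ?thesis
    using continuous_map_mdist[of X "metric (M, d)" "\<lambda>y. f c" f] by simp
qed

lemma ball_cover_open:
  assumes "K \<subseteq> topspace X" and "finite S" and "\<And>\<psi>. \<psi> \<in> S \<Longrightarrow> continuous_map X euclideanreal \<psi>"
    and "B \<in> ball_cover d f K S k"
  shows "openin (subtopology X K) B"
proof -
  obtain c where c: "c \<in> K" "B = K \<inter> {y. d (f c) (f y) + (\<Sum>\<psi>\<in>S. \<bar>\<psi> c - \<psi> y\<bar>) < (1/2)^k}"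
    using assms(4) unfolding ball_cover_def by blast
  have "continuous_map X euclideanreal (\<lambda>y. d (f c) (f y) + (\<Sum>\<psi>\<in>S. \<bar>\<psi> c - \<psi> y\<bar>))"
    using assms c by (intro continuous_intros continuous_map_dist_f) auto
  then have "openin X {y \<in> topspace X. d (f c) (f y) + (\<Sum>\<psi>\<in>S. \<bar>\<psi> c - \<psi> y\<bar>) < (1/2)^k}"
    by (simp add: continuous_map_upper_lower_semicontinuous_lt)
  then have "openin (subtopology X K) (K \<inter> {y \<in> topspace X. d (f c) (f y) + (\<Sum>\<psi>\<in>S. \<bar>\<psi> c - \<psi> y\<bar>) < (1/2)^k})"
    by (rule openin_subtopology_Int2)
  moreover have "K \<inter> {y \<in> topspace X. d (f c) (f y) + (\<Sum>\<psi>\<in>S. \<bar>\<psi> c - \<psi> y\<bar>) < (1/2)^k} = B"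
    using c assms(1) by auto
  ultimately show ?thesis
    by simp
qed

lemma Union_ball_cover: "K \<subseteq> topspace X \<Longrightarrow> \<Union>(ball_cover d f K S k) = K"
  unfolding ball_cover_def using f_in_M by force

lemma ball_cover_pdist:
  assumes "K \<subseteq> topspace X" and "B \<in> ball_cover d f K (\<phi> ` {..<j}) j"
  obtains c where "c \<in> K" "\<And>y. y \<in> B \<Longrightarrow> pdist c y < 4 * (1/2)^j"
proof -
  obtain c where c: "c \<in> K"
    "B = K \<inter> {y. d (f c) (f y) + (\<Sum>\<psi>\<in>\<phi> ` {..<j}. \<bar>\<psi> c - \<psi> y\<bar>) < (1/2)^j}"
    using assms(2) unfolding ball_cover_def by blast
  have "pdist c y < 4 * (1/2)^j" if "y \<in> B" for y
  proof -
    define T where "T = (\<Sum>\<psi>\<in>\<phi> ` {..<j}. \<bar>\<psi> c - \<psi> y\<bar>)"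
    have "\<bar>\<phi> i c - \<phi> i y\<bar> \<le> T" if "i < j" for i
      unfolding T_def using that by (intro member_le_sum[where f="\<lambda>\<psi>. \<bar>\<psi> c - \<psi> y\<bar>"]) auto
    then have "pdist c y \<le> d (f c) (f y) + 2 * T + 2 * (1/2)^j"
      by (intro pdist_le) (auto simp: T_def intro: sum_nonneg)
    moreover have "d (f c) (f y) + T < (1/2)^j" "0 \<le> d (f c) (f y)"
      using \<open>y \<in> B\<close> c by (auto simp: T_def)
    ultimately show ?thesis
      by linarith
  qed
  with c(1) show thesis
    by (rule that)
qed

lemma cozero_traces_preimage_open:
  assumes "K \<subseteq> topspace X"
  shows "cozero_traces K (range \<phi>) \<subseteq> {K \<inter> Q.eqclass -` W | W. openin Z W}"
proof
  fix V assume "V \<in> cozero_traces K (range \<phi>)"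
  then obtain i where V: "V = K \<inter> {x. 0 < \<phi> i x}"
    by (auto simp: cozero_traces_def)
  define W where "W = {P \<in> topspace Z. 0 < (\<phi> i \<circ> Q.rep) P}"
  have "openin Z W"
    using continuous_map_\<phi>_rep[of i] by (simp add: W_def continuous_map_upper_lower_semicontinuous_lt)
  moreover have "Q.eqclass x \<in> W \<longleftrightarrow> 0 < \<phi> i x" if "x \<in> topspace X" for x
    using that by (simp add: W_def \<phi>_rep_eqclass)
  then have "V = K \<inter> Q.eqclass -` W"
    using assms by (auto simp: V)
  ultimately show "V \<in> {K \<inter> Q.eqclass -` W | W. openin Z W}"
    by blast
qed

lemma ball_cover_image_refines:
  assumes "K \<subseteq> topspace X" and "0 < \<delta>"
    and \<delta>: "\<forall>z\<in>Q.eqclass ` K. \<exists>U\<in>\<U>. Q.quot.mball z \<delta> \<inter> Q.eqclass ` K \<subseteq> U"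
  shows "\<exists>j. \<forall>B \<in> ball_cover d f K (\<phi> ` {..<j}) j. \<exists>U\<in>\<U>. Q.eqclass ` B \<subseteq> U"
proof -
  obtain j where j: "(1/2::real)^j < \<delta>/4"
    using real_arch_pow_inv[of "\<delta>/4" "1/2::real"] \<open>0 < \<delta>\<close> by auto
  have "\<exists>U\<in>\<U>. Q.eqclass ` B \<subseteq> U" if B: "B \<in> ball_cover d f K (\<phi> ` {..<j}) j" for B
  proof -
    obtain c where c: "c \<in> K" "\<And>y. y \<in> B \<Longrightarrow> pdist c y < 4 * (1/2)^j"
      using ball_cover_pdist[OF assms(1) B] by blast
    obtain U where U: "U \<in> \<U>" "Q.quot.mball (Q.eqclass c) \<delta> \<inter> Q.eqclass ` K \<subseteq> U"
      using \<delta> c(1) by blast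
    have "B \<subseteq> K"
      using B by (auto simp: ball_cover_def)
    have "Q.eqclass y \<in> Q.quot.mball (Q.eqclass c) \<delta>" if "y \<in> B" for y
    proof -
      have "c \<in> topspace X" "y \<in> topspace X"
        using c(1) that \<open>B \<subseteq> K\<close> assms(1) by auto
      then show ?thesis
        using c(2)[OF that] j by simp
    qed
    with U \<open>B \<subseteq> K\<close> show ?thesis
      by blast
  qed
  then show ?thesis
    by blast
qed

lemma property_C_image:
  assumes K: "compactin X K" and "property_C (subtopology X K)"
    and realizable: "\<And>\<omega>s. set \<omega>s \<subseteq> {ball_cover d f K S k | S k. finite S \<and> S \<subseteq> range \<phi>} \<Longrightarrow>
        disjoint_refinement_cover (Collect (openin (subtopology X K))) K \<omega>s \<Longrightarrow>
        disjoint_refinement_cover (cozero_traces K (range \<phi>)) K \<omega>s"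
  shows "property_C (subtopology Z (Q.eqclass ` K))"
  unfolding property_C_def
proof (intro conjI allI impI)
  have KX: "K \<subseteq> topspace X"
    using K by (rule compactin_subset_topspace)
  have L: "compactin Z (Q.eqclass ` K)"
    using K continuous_map_eqclass by (rule image_compactin)
  then show "compact_space (subtopology Z (Q.eqclass ` K))"
    by (rule compact_space_subtopology)
  have topspace_L: "topspace (subtopology Z (Q.eqclass ` K)) = Q.eqclass ` K"
    using compactin_subset_topspace[OF L] by auto
  fix \<omega> :: "nat \<Rightarrow> 'a set set set"
  assume \<omega>: "\<forall>n. (\<forall>U\<in>\<omega> n. openin (subtopology Z (Q.eqclass ` K)) U) \<and>
              \<Union>(\<omega> n) = topspace (subtopology Z (Q.eqclass ` K))"
  have "\<exists>j. \<forall>B \<in> ball_cover d f K (\<phi> ` {..<j}) j. \<exists>U\<in>\<omega> n. Q.eqclass ` B \<subseteq> U" for n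
  proof -
    obtain \<delta> where "0 < \<delta>" "\<forall>z\<in>Q.eqclass ` K. \<exists>U\<in>\<omega> n. Q.quot.mball z \<delta> \<inter> Q.eqclass ` K \<subseteq> U"
      using Q.quot.lebesgue_number_subtopology[OF L] \<omega> topspace_L by (metis order_refl)
    then show ?thesis
      by (rule ball_cover_image_refines[OF KX])
  qed
  then obtain j where j: "\<And>n B. B \<in> ball_cover d f K (\<phi> ` {..<j n}) (j n) \<Longrightarrow> \<exists>U\<in>\<omega> n. Q.eqclass ` B \<subseteq> U"
    by metis
  define cover where "cover n = ball_cover d f K (\<phi> ` {..<j n}) (j n)" for n
  have "openin (subtopology X K) U" if "U \<in> cover n" for n U
    using ball_cover_open[OF KX _ _ that[unfolded cover_def]] continuous_\<phi> by auto
  then have "(\<forall>U\<in>cover n. openin (subtopology X K) U) \<and> \<Union>(cover n) = topspace (subtopology X K)" for n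
    using KX by (auto simp: cover_def Union_ball_cover)
  then have "\<exists>N. disjoint_refinement_cover (Collect (openin (subtopology X K)))
      (topspace (subtopology X K)) (map cover [0..<N])"
    by (rule property_C_finitely_many_stages[OF assms(2)])
  then obtain N where "disjoint_refinement_cover (Collect (openin (subtopology X K))) K (map cover [0..<N])"
    using KX by (auto simp: Int_absorb1)
  then have "disjoint_refinement_cover (cozero_traces K (range \<phi>)) K (map cover [0..<N])"
    by (intro realizable) (auto simp: cover_def)
  then have "disjoint_refinement_cover {K \<inter> Q.eqclass -` W | W. openin Z W} K (map cover [0..<N])"
    using cozero_traces_preimage_open[OF KX] by (rule disjoint_refinement_cover_mono)
  then show "\<exists>\<gamma>. (\<forall>n. (\<forall>V\<in>\<gamma> n. openin (subtopology Z (Q.eqclass ` K)) V) \<and> pairwise disjnt (\<gamma> n) \<and>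
      refines (\<gamma> n) (\<omega> n)) \<and> \<Union>(\<Union>n. \<gamma> n) = topspace (subtopology Z (Q.eqclass ` K))"
    unfolding topspace_L by (rule image_disjoint_refinement_cover) (auto simp: cover_def j)
qed

end

text \<open>With \<open>\<phi> = 0\<close> the quotient is isometric to \<open>f ` topspace X\<close>: a finite \<open>Y\<close> has finite weight,
  which the rational base of the general construction would exceed.\<close>
lemma factorization_finite_target:
  fixes K :: "nat \<Rightarrow> 'a set"
  assumes "Metric_space M d" and "finite M" and "continuous_map X (Metric_space.mtopology M d) f"
    and "\<And>n. K n \<subseteq> topspace X"
  shows "\<exists>(Z :: 'a set topology) h g. factorization X (Metric_space.mtopology M d) f Z h g \<and>
           metrizable_space Z \<and> (\<forall>n. property_C (subtopology Z (h ` K n)))"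
proof -
  interpret quotient_factorization M d X f "\<lambda>_ _. 0"
    using assms(1,3) by (simp add: quotient_factorization_def quotient_factorization_axioms_def)
  have "finite (topspace Z)"
    using assms(2) by (intro finite_quotient_trivial) simp_all
  then have "finite (topspace (subtopology Z (Q.eqclass ` K n)))" for n
    by (rule finite_subset[rotated]) simp
  then have "property_C (subtopology Z (Q.eqclass ` K n))" for n
    by (intro property_C_finite_t1_space t1_space_subtopology Hausdorff_imp_t1_space
        Q.quot.Hausdorff_space_mtopology)
  moreover have "factorization X mtopology f Z Q.eqclass (f \<circ> Q.rep)"
    by (intro factorization_quotient weight_le_quotient_trivial) simp
  ultimately show ?thesis
    using Q.quot.metrizable_space_mtopology
    by (intro exI[of _ Z] exI[of _ Q.eqclass] exI[of _ "f \<circ> Q.rep"] conjI allI) simp_all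
qed

lemma factorization_infinite_target:
  fixes K :: "nat \<Rightarrow> 'a set"
  assumes "Metric_space M d" and "infinite M" and "continuous_map X (Metric_space.mtopology M d) f"
    and "completely_regular_space X" and "\<And>n. compactin X (K n)"
    and "\<And>n. property_C (subtopology X (K n))"
  shows "\<exists>(Z :: 'a set topology) h g. factorization X (Metric_space.mtopology M d) f Z h g \<and>
           metrizable_space Z \<and> (\<forall>n. property_C (subtopology Z (h ` K n)))"
proof -
  obtain \<Phi> where \<Phi>: "countable \<Phi>" "\<Phi> \<noteq> {}" "\<forall>\<psi>\<in>\<Phi>. continuous_map X euclideanreal \<psi>"
    and realizable: "\<forall>n \<omega>s. set \<omega>s \<subseteq> {ball_cover d f (K n) S k | S k. finite S \<and> S \<subseteq> \<Phi>} \<longrightarrow>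
       disjoint_refinement_cover (Collect (openin (subtopology X (K n)))) (K n) \<omega>s \<longrightarrow>
       disjoint_refinement_cover (cozero_traces (K n) \<Phi>) (K n) \<omega>s"
    using countable_realizing_family[where K=K and C="\<lambda>n. ball_cover d f (K n)", OF assms(4,5)]
    by blast
  define \<phi> where "\<phi> = from_nat_into \<Phi>"
  have "range \<phi> = \<Phi>"
    using \<Phi>(1,2) by (simp add: \<phi>_def range_from_nat_into)
  interpret quotient_factorization M d X f \<phi>
    using assms(1,3) \<Phi>(3) \<open>range \<phi> = \<Phi>\<close> by (auto simp: quotient_factorization_def quotient_factorization_axioms_def)
  have "property_C (subtopology Z (Q.eqclass ` K n))" for n
    using assms(5,6) realizable[folded \<open>range \<phi> = \<Phi>\<close>, rule_format, where n=n] by (rule property_C_image)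
  moreover have "factorization X mtopology f Z Q.eqclass (f \<circ> Q.rep)"
    using assms(2) by (intro factorization_quotient weight_le_quotient)
  ultimately show ?thesis
    using Q.quot.metrizable_space_mtopology
    by (intro exI[of _ Z] exI[of _ Q.eqclass] exI[of _ "f \<circ> Q.rep"] conjI allI) simp_all
qed

theorem proposition6p1:
  fixes X :: "'a topology" and Y :: "'b topology" and f :: "'a \<Rightarrow> 'b"
    and K :: "nat \<Rightarrow> 'a set"
  assumes "completely_regular_space X" and "Hausdorff_space X"
    and "\<And>n. compactin X (K n)"
    and "\<And>n. property_C (subtopology X (K n))"
    and "metrizable_space Y"
    and "continuous_map X Y f"
  shows "\<exists>(Z :: 'a set topology) h g.
           factorization X Y f Z h g \<and> metrizable_space Z \<and>
           (\<forall>n. property_C (subtopology Z (h ` K n)))"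
proof -
  obtain M d where M: "Metric_space M d" and Y: "Y = Metric_space.mtopology M d"
    using assms(5) unfolding metrizable_space_def by blast
  show ?thesis
  proof (cases "finite M")
    case True
    have "K n \<subseteq> topspace X" for n
      using assms(3) by (rule compactin_subset_topspace)
    with M True assms(6) show ?thesis
      unfolding Y by (rule factorization_finite_target)
  next
    case False
    with M assms(6,1,3,4) show ?thesis
      unfolding Y by (intro factorization_infinite_target)
  qed
qed

end
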